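(* For $\gamma>0$ and an integer $d\geq1$, let $BD(\gamma,d)$ be the birth-and-death process on $\{0,1,2,\ldots\}$ with birth rates $\lambda_n(\gamma,d)$ and death rates $\mu_n(\gamma,d)$, $n\geq1$, given by $$\mu_n(\gamma,d)=\sum_{i=1}^d i\gamma^{i}\binom{d}{i}\binom{n-1}{i-1},\qquad \lambda_n(\gamma,d)=\sum_{i=1}^d i\gamma^{i}\binom{d}{i}\binom{n-1}{i-1}+\gamma\sum_{i=1}^{d-1}(d-i)\gamma^{i}\binom{d}{i}\binom{n-1}{i-1},$$ and with an arbitrary birth rate $\lambda_0>0$ at state $0$. Then $BD(\gamma,d)$ is null-recurrent for $d\leq2$ and transient for $d\geq3$. *)

theory Defs
  imports Complex_Main
begin

(* Recurrence / transience and
   null recurrence are defined through its embedded jump chain, whose transition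
   probabilities are p(i,i+1) = lam i / (lam i + mu i), p(i,i-1) = mu i / (lam i + mu i),
   together with the exponential holding times of mean 1/(lam i + mu i). *)

definition up_prob :: "(nat \<Rightarrow> real) \<Rightarrow> (nat \<Rightarrow> real) \<Rightarrow> nat \<Rightarrow> real" where
  "up_prob lam mu i = lam i / (lam i + mu i)"

(* probability, starting from state i, of hitting state 0 within n jumps *)
fun hit_within :: "(nat \<Rightarrow> real) \<Rightarrow> (nat \<Rightarrow> real) \<Rightarrow> nat \<Rightarrow> nat \<Rightarrow> real" where
  "hit_within lam mu 0 i = (if i = 0 then 1 else 0)"
| "hit_within lam mu (Suc n) i =
     (if i = 0 then 1
      else up_prob lam mu i * hit_within lam mu n (Suc i)
         + (1 - up_prob lam mu i) * hit_within lam mu n (i - 1))"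

(* expected time (in the continuous-time process), starting from state i,
   spent before min(hitting time of 0, n-th jump) *)
fun time_within :: "(nat \<Rightarrow> real) \<Rightarrow> (nat \<Rightarrow> real) \<Rightarrow> nat \<Rightarrow> nat \<Rightarrow> real" where
  "time_within lam mu 0 i = 0"
| "time_within lam mu (Suc n) i =
     (if i = 0 then 0
      else 1 / (lam i + mu i) + up_prob lam mu i * time_within lam mu n (Suc i)
         + (1 - up_prob lam mu i) * time_within lam mu n (i - 1))"

(* probability of ever returning to 0, starting from 0: since mu 0 = 0 the first jump
   goes to 1, after which 0 must be hit *)
definition return_prob :: "(nat \<Rightarrow> real) \<Rightarrow> (nat \<Rightarrow> real) \<Rightarrow> real" where
  "return_prob lam mu = lim (\<lambda>n. hit_within lam mu n 1)"

definition bd_recurrent :: "(nat \<Rightarrow> real) \<Rightarrow> (nat \<Rightarrow> real) \<Rightarrow> bool" where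
  "bd_recurrent lam mu \<longleftrightarrow> return_prob lam mu = 1"

definition bd_transient :: "(nat \<Rightarrow> real) \<Rightarrow> (nat \<Rightarrow> real) \<Rightarrow> bool" where
  "bd_transient lam mu \<longleftrightarrow> return_prob lam mu < 1"

(* mean return time to 0 is 1/lam 0 + E_1[tau_0]; null recurrence: recurrent with
   infinite mean return time, i.e. E_1[tau_0] = sup_n time_within n 1 = infinity *)
definition bd_null_recurrent :: "(nat \<Rightarrow> real) \<Rightarrow> (nat \<Rightarrow> real) \<Rightarrow> bool" where
  "bd_null_recurrent lam mu \<longleftrightarrow>
     bd_recurrent lam mu \<and> \<not> bdd_above (range (\<lambda>n. time_within lam mu n 1))"

definition bd_mu :: "real \<Rightarrow> nat \<Rightarrow> nat \<Rightarrow> real" where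
  "bd_mu \<gamma> d n = (if n = 0 then 0 else
     (\<Sum>i=1..d. real i * \<gamma> ^ i * real (d choose i) * real ((n - 1) choose (i - 1))))"

definition bd_lam :: "real \<Rightarrow> nat \<Rightarrow> real \<Rightarrow> nat \<Rightarrow> real" where
  "bd_lam \<gamma> d l0 n = (if n = 0 then l0 else
     (\<Sum>i=1..d. real i * \<gamma> ^ i * real (d choose i) * real ((n - 1) choose (i - 1)))
     + \<gamma> * (\<Sum>i=1..d-1. real (d - i) * \<gamma> ^ i * real (d choose i) * real ((n - 1) choose (i - 1))))"

end

theory Submission
  imports Defs "HOL-Analysis.Summation_Tests"
begin

text \<open>For \<open>n \<ge> 1\<close> both rates are multiples of one weight \<open>w\<close>: \<open>\<lambda>(n) = d\<gamma> w(n)\<close> and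
  \<open>\<mu>(n) = d\<gamma> w(n-1)\<close>. Hence the scale function of the chain is \<open>s(N) = \<Sum>k<N. 1/w(k)\<close>, and the
  probability of hitting 0 from \<open>N\<close> is \<open>h(N) = 1 - (1 - h(1)) w(0) s(N)\<close>: the chain is recurrent
  iff \<open>s\<close> diverges, and otherwise the harmonic function \<open>1 - s/s(\<infinity>)\<close> gives \<open>h(1) < 1\<close>.
  The expected hitting times satisfy \<open>w(k) (T(k+1) - T(k)) = w(0) T(1) - k/(d\<gamma>)\<close>, so finite
  \<open>T\<close> would eventually decrease by \<open>1/(d\<gamma> w(k))\<close> per step, which is impossible when \<open>s\<close>
  diverges; thus recurrence is always null. Finally \<open>w(m)\<close> grows linearly for \<open>d \<le> 2\<close> and
  quadratically for \<open>d \<ge> 3\<close>.\<close>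

lemma limit_of_recursion:
  fixes f :: "nat \<Rightarrow> nat \<Rightarrow> real"
  assumes lim: "\<And>j. (\<lambda>n. f n j) \<longlonglongrightarrow> F j"
    and rec: "\<And>n. f (Suc n) i = e + q * f n (Suc i) + (1 - q) * f n (i - 1)"
  shows "F i = e + q * F (Suc i) + (1 - q) * F (i - 1)"
proof (rule LIMSEQ_unique)
  show "(\<lambda>n. f (Suc n) i) \<longlonglongrightarrow> F i"
    using lim by (rule LIMSEQ_Suc)
  show "(\<lambda>n. f (Suc n) i) \<longlonglongrightarrow> e + q * F (Suc i) + (1 - q) * F (i - 1)"
    unfolding rec by (intro tendsto_intros lim)
qed

locale bd_chain =
  fixes lam mu :: "nat \<Rightarrow> real"
  assumes lam_nonneg: "0 < i \<Longrightarrow> 0 \<le> lam i"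
    and mu_nonneg: "0 < i \<Longrightarrow> 0 \<le> mu i"
begin

lemma up_prob_nonneg: "0 < i \<Longrightarrow> 0 \<le> up_prob lam mu i"
  using lam_nonneg mu_nonneg by (simp add: up_prob_def)

lemma up_prob_le_one: "0 < i \<Longrightarrow> up_prob lam mu i \<le> 1"
  using lam_nonneg[of i] mu_nonneg[of i] by (cases "lam i + mu i = 0") (simp_all add: up_prob_def)

text \<open>Both \<open>hit_within\<close> and \<open>time_within\<close> iterate the one-step operator
  \<open>f \<mapsto> e + P f\<close> of the jump chain, with the value at 0 held fixed.\<close>

lemma iterate_nonneg:
  fixes f :: "nat \<Rightarrow> nat \<Rightarrow> real"
  assumes rec: "\<And>n i. 0 < i \<Longrightarrow>
      f (Suc n) i = e i + up_prob lam mu i * f n (Suc i) + (1 - up_prob lam mu i) * f n (i - 1)"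
    and e: "\<And>i. 0 < i \<Longrightarrow> 0 \<le> e i"
    and start: "\<And>i. 0 \<le> f 0 i" and at_zero: "\<And>n. 0 \<le> f n 0"
  shows "0 \<le> f n i"
proof (induction n arbitrary: i)
  case (Suc n)
  show ?case
  proof (cases "i = 0")
    case False
    then show ?thesis
      using rec[of i n] e[of i] Suc.IH up_prob_nonneg[of i] up_prob_le_one[of i] by simp
  qed (use at_zero in simp)
qed (rule start)

lemma iterate_le_superharmonic:
  fixes f :: "nat \<Rightarrow> nat \<Rightarrow> real"
  assumes rec: "\<And>n i. 0 < i \<Longrightarrow>
      f (Suc n) i = e i + up_prob lam mu i * f n (Suc i) + (1 - up_prob lam mu i) * f n (i - 1)"
    and super: "\<And>i. 0 < i \<Longrightarrow>
      e i + up_prob lam mu i * g (Suc i) + (1 - up_prob lam mu i) * g (i - 1) \<le> g i"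
    and start: "\<And>i. f 0 i \<le> g i" and at_zero: "\<And>n. f n 0 \<le> g 0"
  shows "f n i \<le> g i"
proof (induction n arbitrary: i)
  case (Suc n)
  show ?case
  proof (cases "i = 0")
    case False
    have "up_prob lam mu i * f n (Suc i) \<le> up_prob lam mu i * g (Suc i)"
      using Suc.IH up_prob_nonneg[of i] False by (simp add: mult_left_mono)
    moreover have "(1 - up_prob lam mu i) * f n (i - 1) \<le> (1 - up_prob lam mu i) * g (i - 1)"
      using Suc.IH up_prob_le_one[of i] False by (simp add: mult_left_mono)
    ultimately show ?thesis
      using rec[of i n] super[of i] False by simp
  qed (use at_zero in simp)
qed (rule start)

lemma iterate_mono:
  fixes f :: "nat \<Rightarrow> nat \<Rightarrow> real"
  assumes rec: "\<And>n i. 0 < i \<Longrightarrow>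
      f (Suc n) i = e i + up_prob lam mu i * f n (Suc i) + (1 - up_prob lam mu i) * f n (i - 1)"
    and start: "\<And>i. f 0 i \<le> f (Suc 0) i" and at_zero: "\<And>n. f (Suc n) 0 = f n 0"
  shows "f n i \<le> f (Suc n) i"
proof (induction n arbitrary: i)
  case (Suc n)
  show ?case
  proof (cases "i = 0")
    case False
    have "up_prob lam mu i * f n (Suc i) \<le> up_prob lam mu i * f (Suc n) (Suc i)"
      using Suc.IH up_prob_nonneg[of i] False by (simp add: mult_left_mono)
    moreover have
      "(1 - up_prob lam mu i) * f n (i - 1) \<le> (1 - up_prob lam mu i) * f (Suc n) (i - 1)"
      using Suc.IH up_prob_le_one[of i] False by (simp add: mult_left_mono)
    ultimately show ?thesis
      using rec[of i n] rec[of i "Suc n"] False by simp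
  qed (use at_zero in simp)
qed (rule start)

lemma hit_within_rec:
  "0 < i \<Longrightarrow> hit_within lam mu (Suc n) i = 0 + up_prob lam mu i * hit_within lam mu n (Suc i)
     + (1 - up_prob lam mu i) * hit_within lam mu n (i - 1)"
  by simp

lemma time_within_rec:
  "0 < i \<Longrightarrow> time_within lam mu (Suc n) i = 1 / (lam i + mu i)
     + up_prob lam mu i * time_within lam mu n (Suc i)
     + (1 - up_prob lam mu i) * time_within lam mu n (i - 1)"
  by simp

lemma hit_within_at_zero: "hit_within lam mu n 0 = 1"
  by (cases n) simp_all

lemma time_within_at_zero: "time_within lam mu n 0 = 0"
  by (cases n) simp_all

lemma hit_within_nonneg: "0 \<le> hit_within lam mu n i"
  by (rule iterate_nonneg[where f="hit_within lam mu" and e="\<lambda>_. 0", OF hit_within_rec])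
    (simp_all add: hit_within_at_zero)

lemma hit_within_le_superharmonic:
  assumes "\<And>i. 0 \<le> g i" and "1 \<le> g 0"
    and "\<And>i. 0 < i \<Longrightarrow> up_prob lam mu i * g (Suc i) + (1 - up_prob lam mu i) * g (i - 1) \<le> g i"
  shows "hit_within lam mu n i \<le> g i"
  by (rule iterate_le_superharmonic[where f="hit_within lam mu" and e="\<lambda>_. 0", OF hit_within_rec])
    (use assms in \<open>simp_all add: hit_within_at_zero\<close>)

lemma hit_within_le_one: "hit_within lam mu n i \<le> 1"
  by (rule hit_within_le_superharmonic) simp_all

lemma incseq_hit_within: "incseq (\<lambda>n. hit_within lam mu n i)"
proof (rule incseq_SucI,
    rule iterate_mono[where f="hit_within lam mu" and e="\<lambda>_. 0", OF hit_within_rec])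
  show "hit_within lam mu 0 j \<le> hit_within lam mu (Suc 0) j" for j
    using hit_within_nonneg[of "Suc 0" j] by (cases "j = 0") (simp_all only: hit_within_at_zero, simp)
qed (simp_all add: hit_within_at_zero)

definition hit_prob :: "nat \<Rightarrow> real" where
  "hit_prob i = (SUP n. hit_within lam mu n i)"

lemma hit_within_tendsto: "(\<lambda>n. hit_within lam mu n i) \<longlonglongrightarrow> hit_prob i"
  unfolding hit_prob_def
  by (rule LIMSEQ_incseq_SUP[OF _ incseq_hit_within]) (auto intro: bdd_aboveI2 hit_within_le_one)

lemma return_prob_eq_hit_prob: "return_prob lam mu = hit_prob 1"
  unfolding return_prob_def by (rule limI[OF hit_within_tendsto])

lemma hit_prob_zero: "hit_prob 0 = 1"
  using LIMSEQ_unique[OF hit_within_tendsto[of 0]] by (simp add: hit_within_at_zero)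

lemma hit_prob_nonneg: "0 \<le> hit_prob i"
  by (rule LIMSEQ_le_const[OF hit_within_tendsto]) (simp add: hit_within_nonneg)

lemma hit_prob_le_superharmonic:
  assumes "\<And>i. 0 \<le> g i" and "1 \<le> g 0"
    and "\<And>i. 0 < i \<Longrightarrow> up_prob lam mu i * g (Suc i) + (1 - up_prob lam mu i) * g (i - 1) \<le> g i"
  shows "hit_prob i \<le> g i"
  by (rule LIMSEQ_le_const2[OF hit_within_tendsto]) (use hit_within_le_superharmonic[OF assms] in simp)

lemma hit_prob_le_one: "hit_prob i \<le> 1"
  by (rule hit_prob_le_superharmonic) simp_all

lemma hit_prob_harmonic:
  assumes "0 < i"
  shows "hit_prob i = up_prob lam mu i * hit_prob (Suc i) + (1 - up_prob lam mu i) * hit_prob (i - 1)"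
  using limit_of_recursion[where f="hit_within lam mu" and e=0,
      OF hit_within_tendsto hit_within_rec[OF assms]]
  by simp

lemma time_within_nonneg: "0 \<le> time_within lam mu n i"
  by (rule iterate_nonneg[where f="time_within lam mu" and e="\<lambda>i. 1 / (lam i + mu i)",
        OF time_within_rec])
    (simp_all add: time_within_at_zero lam_nonneg mu_nonneg)

lemma incseq_time_within: "incseq (\<lambda>n. time_within lam mu n i)"
proof (rule incseq_SucI,
    rule iterate_mono[where f="time_within lam mu" and e="\<lambda>i. 1 / (lam i + mu i)",
      OF time_within_rec])
  show "time_within lam mu 0 j \<le> time_within lam mu (Suc 0) j" for j
    by (simp only: time_within.simps(1)) (rule time_within_nonneg)
qed (simp_all add: time_within_at_zero)

definition mean_time :: "nat \<Rightarrow> real" where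
  "mean_time i = (SUP n. time_within lam mu n i)"

lemma time_within_tendsto:
  assumes "bdd_above (range (\<lambda>n. time_within lam mu n i))"
  shows "(\<lambda>n. time_within lam mu n i) \<longlonglongrightarrow> mean_time i"
  unfolding mean_time_def using assms incseq_time_within by (rule LIMSEQ_incseq_SUP)

end

lemma weighted_mean_increment:
  fixes u v b x y f :: real
  assumes "0 < u" "0 < v" and "f = b / (u + v) + u / (u + v) * x + (1 - u / (u + v)) * y"
  shows "u * (x - f) = v * (f - y) - b"
proof -
  have "(u + v) * f = b + u * x + v * y"
    using assms by (simp add: divide_simps) (simp add: algebra_simps)
  then show ?thesis
    by (simp add: algebra_simps)
qed

locale bd_scale =
  fixes lam mu :: "nat \<Rightarrow> real" and c :: real and a :: "nat \<Rightarrow> real"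
  assumes c_pos: "0 < c" and a_pos: "0 < a k"
    and lam_eq: "0 < i \<Longrightarrow> lam i = c * a i"
    and mu_eq: "0 < i \<Longrightarrow> mu i = c * a (i - 1)"

sublocale bd_scale \<subseteq> bd_chain
  by unfold_locales (simp_all add: lam_eq mu_eq c_pos a_pos less_imp_le)

context bd_scale
begin

lemma rate_sum_eq: "0 < i \<Longrightarrow> lam i + mu i = c * (a i + a (i - 1))"
  by (simp add: lam_eq mu_eq distrib_left)

lemma up_prob_eq:
  assumes "0 < i"
  shows "up_prob lam mu i = a i / (a i + a (i - 1))"
  unfolding up_prob_def rate_sum_eq[OF assms] using c_pos by (simp add: lam_eq[OF assms])

lemma up_prob_pos: "0 < i \<Longrightarrow> 0 < up_prob lam mu i"
  using a_pos[of i] a_pos[of "i - 1"] by (simp add: up_prob_eq)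

lemma increment_identity:
  assumes "\<And>i. 0 < i \<Longrightarrow>
      f i = b / (a i + a (i - 1)) + up_prob lam mu i * f (Suc i) + (1 - up_prob lam mu i) * f (i - 1)"
  shows "a k * (f (Suc k) - f k) = a 0 * (f 1 - f 0) - real k * b"
proof (induction k)
  case (Suc k)
  have "f (Suc k) = b / (a (Suc k) + a k) + a (Suc k) / (a (Suc k) + a k) * f (Suc (Suc k))
      + (1 - a (Suc k) / (a (Suc k) + a k)) * f k"
    using assms[of "Suc k"] by (simp add: up_prob_eq)
  from weighted_mean_increment[OF a_pos a_pos this] Suc.IH show ?case
    by (simp add: algebra_simps)
qed simp

definition scale :: "nat \<Rightarrow> real" where
  "scale N = (\<Sum>k<N. 1 / a k)"

lemma scale_Suc: "scale (Suc N) = scale N + 1 / a N"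
  by (simp add: scale_def)

lemma scale_harmonic:
  assumes "0 < i"
  shows "up_prob lam mu i * scale (Suc i) + (1 - up_prob lam mu i) * scale (i - 1) = scale i"
proof -
  obtain k where i: "i = Suc k"
    using assms gr0_implies_Suc by blast
  define q where "q = up_prob lam mu i"
  have q: "q = a i / (a i + a k)"
    using up_prob_eq[OF assms] by (simp add: q_def i)
  have "a i \<noteq> 0" "a k \<noteq> 0" "a i + a k \<noteq> 0"
    using a_pos[of i] a_pos[of k] by simp_all
  moreover from this have "1 - q = a k / (a i + a k)"
    by (simp add: q field_simps)
  ultimately have "q / a i = (1 - q) / a k"
    by (simp add: q)
  moreover have "q * scale (Suc i) + (1 - q) * scale k = scale i + q / a i - (1 - q) / a k"
    by (simp add: i scale_Suc algebra_simps diff_divide_distrib)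
  ultimately show ?thesis
    by (simp add: q_def i)
qed

lemma scale_mono: "M \<le> N \<Longrightarrow> scale M \<le> scale N"
  unfolding scale_def by (rule sum_mono2) (simp_all add: less_imp_le[OF a_pos])

lemma scale_le_suminf: "summable (\<lambda>k. 1 / a k) \<Longrightarrow> scale N \<le> (\<Sum>k. 1 / a k)"
  unfolding scale_def by (rule sum_le_suminf) (simp_all add: less_imp_le[OF a_pos])

lemma summable_iff_scale_bounded: "summable (\<lambda>k. 1 / a k) \<longleftrightarrow> (\<exists>B. \<forall>N. scale N \<le> B)"
proof
  assume "summable (\<lambda>k. 1 / a k)"
  then show "\<exists>B. \<forall>N. scale N \<le> B"
    using scale_le_suminf by blast
next
  assume "\<exists>B. \<forall>N. scale N \<le> B"
  then show "summable (\<lambda>k. 1 / a k)"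
    unfolding scale_def by (auto intro: summableI_nonneg_bounded simp: less_imp_le[OF a_pos])
qed

lemma hit_prob_eq_scale: "hit_prob N = 1 - (1 - hit_prob 1) * a 0 * scale N"
proof (induction N)
  case (Suc N)
  have "hit_prob i = 0 / (a i + a (i - 1))
      + up_prob lam mu i * hit_prob (Suc i) + (1 - up_prob lam mu i) * hit_prob (i - 1)" if "0 < i" for i
    using hit_prob_harmonic[OF that] by simp
  from increment_identity[OF this, of N]
  have "a N * (hit_prob (Suc N) - hit_prob N) = a 0 * (hit_prob 1 - 1)"
    by (simp add: hit_prob_zero)
  then have "hit_prob (Suc N) = hit_prob N - (1 - hit_prob 1) * a 0 / a N"
    using a_pos[of N] by (simp add: field_simps)
  with Suc.IH show ?case
    by (simp add: scale_Suc algebra_simps diff_divide_distrib)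
qed (simp add: hit_prob_zero scale_def)

lemma recurrent_if_not_summable:
  assumes "\<not> summable (\<lambda>k. 1 / a k)"
  shows "bd_recurrent lam mu"
proof -
  have "hit_prob 1 = 1"
  proof (rule ccontr)
    assume "hit_prob 1 \<noteq> 1"
    then have pos: "0 < (1 - hit_prob 1) * a 0"
      using hit_prob_le_one[of 1] a_pos[of 0] by simp
    have "scale N \<le> 1 / ((1 - hit_prob 1) * a 0)" for N
      using hit_prob_eq_scale[of N] hit_prob_nonneg[of N] pos
      by (simp add: le_divide_eq algebra_simps)
    with assms show False
      by (auto simp: summable_iff_scale_bounded)
  qed
  then show ?thesis
    by (simp add: bd_recurrent_def return_prob_eq_hit_prob)
qed

lemma transient_if_summable:
  assumes "summable (\<lambda>k. 1 / a k)"
  shows "bd_transient lam mu"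
proof -
  define S where "S = (\<Sum>k. 1 / a k)"
  have scale_le: "scale N \<le> S" for N
    unfolding S_def using assms by (rule scale_le_suminf)
  have scale_1: "scale 1 = 1 / a 0"
    by (simp add: scale_def)
  moreover have "0 < 1 / a 0"
    using a_pos[of 0] by simp
  ultimately have S_pos: "0 < S"
    using scale_le[of 1] by linarith
  define g where "g i = 1 - scale i / S" for i
  have "hit_prob 1 \<le> g 1"
  proof (rule hit_prob_le_superharmonic)
    show "0 \<le> g i" for i
      using scale_le[of i] S_pos by (simp add: g_def)
    show "1 \<le> g 0"
      by (simp add: g_def scale_def)
    show "up_prob lam mu i * g (Suc i) + (1 - up_prob lam mu i) * g (i - 1) \<le> g i" if "0 < i" for i
      using scale_harmonic[OF that] by (simp add: g_def algebra_simps add_divide_distrib[symmetric])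
  qed
  also have "g 1 < 1"
    using scale_1 a_pos[of 0] S_pos by (simp add: g_def)
  finally show ?thesis
    by (simp add: bd_transient_def return_prob_eq_hit_prob)
qed

lemma bdd_above_time_within:
  assumes "bdd_above (range (\<lambda>n. time_within lam mu n 1))"
  shows "bdd_above (range (\<lambda>n. time_within lam mu n i))"
proof (induction i)
  case 0
  then show ?case
    by (simp add: time_within_at_zero)
next
  case (Suc i)
  show ?case
  proof (cases "i = 0")
    case False
    from Suc.IH obtain C where C: "\<And>n. time_within lam mu n i \<le> C"
      by (auto simp: bdd_above_def)
    define q where "q = up_prob lam mu i"
    have q: "0 < q" "q \<le> 1"
      using up_prob_pos[of i] up_prob_le_one[of i] False by (simp_all add: q_def)
    have "q * time_within lam mu n (Suc i) \<le> C" for n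
    proof -
      have "q * time_within lam mu n (Suc i) \<le> time_within lam mu (Suc n) i"
        using time_within_rec[of i n] False q time_within_nonneg[of n "i - 1"]
          lam_nonneg[of i] mu_nonneg[of i]
        by (simp add: q_def)
      also have "\<dots> \<le> C"
        by (rule C)
      finally show ?thesis .
    qed
    then have "time_within lam mu n (Suc i) \<le> C / q" for n
      using q by (simp add: le_divide_eq mult.commute)
    then show ?thesis
      by (intro bdd_aboveI2[where M = "C / q"]) simp
  qed (use assms in simp)
qed

lemma mean_time_increment:
  assumes "bdd_above (range (\<lambda>n. time_within lam mu n 1))"
  shows "a k * (mean_time (Suc k) - mean_time k) = a 0 * mean_time 1 - real k / c"
proof -
  have lim: "(\<lambda>n. time_within lam mu n i) \<longlonglongrightarrow> mean_time i" for i
    by (rule time_within_tendsto[OF bdd_above_time_within[OF assms]])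
  have zero: "mean_time 0 = 0"
    using LIMSEQ_unique[OF lim[of 0]] by (simp add: time_within_at_zero)
  have harmonic: "mean_time i = (1 / c) / (a i + a (i - 1))
      + up_prob lam mu i * mean_time (Suc i) + (1 - up_prob lam mu i) * mean_time (i - 1)" if "0 < i" for i
    using limit_of_recursion[where f="time_within lam mu" and e="1 / (lam i + mu i)",
        OF lim time_within_rec[OF that]] that
    by (simp add: rate_sum_eq)
  from increment_identity[OF harmonic, of k] zero show ?thesis
    by simp
qed

lemma mean_time_nonneg:
  assumes "bdd_above (range (\<lambda>n. time_within lam mu n 1))"
  shows "0 \<le> mean_time i"
  by (rule LIMSEQ_le_const[OF time_within_tendsto[OF bdd_above_time_within[OF assms]]])
    (simp add: time_within_nonneg)

lemma time_unbounded_if_not_summable: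
  assumes "\<not> summable (\<lambda>k. 1 / a k)"
  shows "\<not> bdd_above (range (\<lambda>n. time_within lam mu n 1))"
proof
  assume bdd: "bdd_above (range (\<lambda>n. time_within lam mu n 1))"
  obtain K :: nat where K: "c * a 0 * mean_time 1 + 1 \<le> real K"
    using real_arch_simple by blast
  define V where "V k = mean_time k + scale k / c" for k
  have V_step: "V (Suc k) \<le> V k" if "K \<le> k" for k
  proof -
    have "(a 0 * mean_time 1 + 1 / c) * c \<le> real k"
      using K that c_pos by (simp add: algebra_simps)
    then have "a 0 * mean_time 1 + 1 / c \<le> real k / c"
      using c_pos by (simp add: le_divide_eq)
    then have "a k * (mean_time (Suc k) - mean_time k) \<le> - (1 / c)"
      using mean_time_increment[OF bdd, of k] by simp
    then have "mean_time (Suc k) - mean_time k \<le> - (1 / c) / a k"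
      using a_pos[of k] by (metis pos_le_divide_eq mult.commute)
    then show ?thesis
      by (simp add: V_def scale_Suc add_divide_distrib mult.commute)
  qed
  have V_le: "V N \<le> V K" if "K \<le> N" for N
    using that by (induction rule: dec_induct) (use V_step order_trans in blast)+
  have "scale N \<le> c * V K" for N
  proof -
    have "scale N \<le> scale (max N K)"
      by (rule scale_mono) simp
    also have "\<dots> \<le> c * V (max N K)"
      using mean_time_nonneg[OF bdd, of "max N K"] c_pos by (simp add: V_def algebra_simps)
    also have "\<dots> \<le> c * V K"
      using V_le[of "max N K"] c_pos by simp
    finally show ?thesis .
  qed
  with assms show False
    by (auto simp: summable_iff_scale_bounded)
qed

lemma null_recurrent_if_not_summable:
  assumes "\<not> summable (\<lambda>k. 1 / a k)"
  shows "bd_null_recurrent lam mu"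
  unfolding bd_null_recurrent_def
  using recurrent_if_not_summable[OF assms] time_unbounded_if_not_summable[OF assms] by blast

end

text \<open>With \<open>w\<close> below, \<open>\<mu>\<^sub>n = d\<gamma> w(n-1)\<close> and \<open>\<lambda>\<^sub>n = d\<gamma> w(n)\<close> for \<open>n \<ge> 1\<close>, by
  \<open>i C(d,i) = d C(d-1,i-1)\<close>, \<open>(d-i) C(d,i) = d C(d-1,i)\<close> and Pascal's rule.\<close>

definition bd_weight :: "real \<Rightarrow> nat \<Rightarrow> nat \<Rightarrow> real" where
  "bd_weight \<gamma> d m = (\<Sum>j<d. \<gamma> ^ j * real ((d - 1) choose j) * real (m choose j))"

lemma bd_weight_Suc:
  "bd_weight \<gamma> (Suc e) (Suc m) =
     bd_weight \<gamma> (Suc e) m + (\<Sum>j<e. \<gamma> ^ Suc j * real (e choose Suc j) * real (m choose j))"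
proof -
  have "bd_weight \<gamma> (Suc e) (Suc m)
      = 1 + (\<Sum>j<e. \<gamma> ^ Suc j * real (e choose Suc j) * real (Suc m choose Suc j))"
    unfolding bd_weight_def by (subst sum.lessThan_Suc_shift) simp
  also have "\<dots> = 1 + (\<Sum>j<e. \<gamma> ^ Suc j * real (e choose Suc j) * real (m choose Suc j))
      + (\<Sum>j<e. \<gamma> ^ Suc j * real (e choose Suc j) * real (m choose j))"
    by (simp add: sum.distrib algebra_simps)
  also have "1 + (\<Sum>j<e. \<gamma> ^ Suc j * real (e choose Suc j) * real (m choose Suc j)) = bd_weight \<gamma> (Suc e) m"
    unfolding bd_weight_def by (subst sum.lessThan_Suc_shift) simp
  finally show ?thesis .
qed

lemma bd_mu_Suc: "bd_mu \<gamma> (Suc e) (Suc m) = real (Suc e) * \<gamma> * bd_weight \<gamma> (Suc e) m"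
proof -
  have absorb: "real (Suc j) * real (Suc e choose Suc j) = real (Suc e) * real (e choose j)" for j
    by (metis Suc_times_binomial_eq mult.commute of_nat_mult)
  have "bd_mu \<gamma> (Suc e) (Suc m)
      = (\<Sum>j<Suc e. real (Suc j) * real (Suc e choose Suc j) * (\<gamma> * (\<gamma> ^ j * real (m choose j))))"
    unfolding bd_mu_def by (simp add: sum.atLeast1_atMost_eq mult_ac)
  also have "\<dots> = (\<Sum>j<Suc e. real (Suc e) * \<gamma> * (\<gamma> ^ j * real (e choose j) * real (m choose j)))"
    unfolding absorb by (simp add: mult_ac)
  finally show ?thesis
    by (simp add: bd_weight_def sum_distrib_left del: sum.lessThan_Suc)
qed

lemma bd_lam_Suc: "bd_lam \<gamma> (Suc e) l0 (Suc m) = real (Suc e) * \<gamma> * bd_weight \<gamma> (Suc e) (Suc m)"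
proof -
  have absorb: "real (e - j) * real (Suc e choose Suc j) = real (Suc e) * real (e choose Suc j)" for j
    using binomial_absorb_comp[of "Suc e" "Suc j"] by (simp only: diff_Suc_Suc diff_Suc_1 flip: of_nat_mult)
  have "(\<Sum>i=1..e. real (Suc e - i) * \<gamma> ^ i * real (Suc e choose i) * real (m choose (i - 1)))
      = (\<Sum>j<e. real (e - j) * real (Suc e choose Suc j) * (\<gamma> ^ Suc j * real (m choose j)))"
    by (simp add: sum.atLeast1_atMost_eq mult_ac)
  also have "\<dots> = (\<Sum>j<e. real (Suc e) * (\<gamma> ^ Suc j * real (e choose Suc j) * real (m choose j)))"
    unfolding absorb by (simp add: mult_ac)
  finally have "bd_lam \<gamma> (Suc e) l0 (Suc m) = bd_mu \<gamma> (Suc e) (Suc m)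
      + real (Suc e) * \<gamma> * (\<Sum>j<e. \<gamma> ^ Suc j * real (e choose Suc j) * real (m choose j))"
    by (simp add: bd_lam_def bd_mu_def sum_distrib_left mult_ac)
  then show ?thesis
    by (simp add: bd_mu_Suc bd_weight_Suc distrib_left)
qed

lemma bd_weight_ge_one:
  assumes "0 \<le> \<gamma>" and "0 < d"
  shows "1 \<le> bd_weight \<gamma> d m"
proof -
  have "(\<Sum>j\<in>{0}. \<gamma> ^ j * real ((d - 1) choose j) * real (m choose j)) \<le> bd_weight \<gamma> d m"
    unfolding bd_weight_def by (rule sum_mono2) (use assms in auto)
  then show ?thesis
    by simp
qed

lemma bd_weight_le_linear:
  assumes "0 \<le> \<gamma>" and "d \<le> 2"
  shows "bd_weight \<gamma> d m \<le> 1 + \<gamma> * real m"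
proof -
  have "d = 0 \<or> d = 1 \<or> d = 2"
    using assms by auto
  then show ?thesis
    using assms by (auto simp: bd_weight_def numeral_2_eq_2)
qed

lemma bd_weight_ge_quadratic:
  assumes "0 \<le> \<gamma>" and "3 \<le> d"
  shows "\<gamma>\<^sup>2 * real (m choose 2) \<le> bd_weight \<gamma> d m"
proof -
  have "1 \<le> (d - 1) choose 2"
    using assms by (simp add: Suc_le_eq)
  then have "\<gamma>\<^sup>2 * real (m choose 2) * 1 \<le> \<gamma>\<^sup>2 * real (m choose 2) * real ((d - 1) choose 2)"
    by (intro mult_left_mono) simp_all
  also have "\<dots> = (\<Sum>j\<in>{2}. \<gamma> ^ j * real ((d - 1) choose j) * real (m choose j))"
    by (simp add: mult_ac)
  also have "\<dots> \<le> bd_weight \<gamma> d m"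
    unfolding bd_weight_def by (rule sum_mono2) (use assms in auto)
  finally show ?thesis
    by simp
qed

lemma not_summable_inverse_bd_weight:
  assumes "0 < \<gamma>" and "0 < d" and "d \<le> 2"
  shows "\<not> summable (\<lambda>m. 1 / bd_weight \<gamma> d m)"
proof
  assume "summable (\<lambda>m. 1 / bd_weight \<gamma> d m)"
  then have "summable (\<lambda>m. 1 / real (Suc m))"
  proof (rule summable_comparison_test'[OF summable_mult[of _ "1 + \<gamma>"]])
    fix m :: nat
    have "bd_weight \<gamma> d m \<le> (1 + \<gamma>) * real (Suc m)"
      using bd_weight_le_linear[of \<gamma> d m] assms by (simp add: algebra_simps)
    then have "(1 + \<gamma>) / ((1 + \<gamma>) * real (Suc m)) \<le> (1 + \<gamma>) / bd_weight \<gamma> d m"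
      using bd_weight_ge_one[of \<gamma> d m] assms by (intro divide_left_mono) simp_all
    then show "norm (1 / real (Suc m)) \<le> (1 + \<gamma>) * (1 / bd_weight \<gamma> d m)"
      using assms by simp
  qed
  then show False
    using not_summable_harmonic[where 'a = real] summable_Suc_iff[where f = "\<lambda>n. 1 / real n"]
    by (simp add: inverse_eq_divide)
qed

lemma summable_inverse_bd_weight:
  assumes "0 < \<gamma>" and "3 \<le> d"
  shows "summable (\<lambda>m. 1 / bd_weight \<gamma> d m)"
proof (rule summable_comparison_test'[OF summable_mult[OF inverse_power_summable[of 2]]])
  fix m :: nat
  assume "2 \<le> m"
  have "2 * real m \<le> real m * real m"
    using \<open>2 \<le> m\<close> by (intro mult_right_mono) simp_all
  moreover have "2 * real (m choose 2) = real m * real m - real m"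
    by (induction m) (simp_all add: numeral_2_eq_2 algebra_simps)
  ultimately have "real m ^ 2 \<le> 4 * real (m choose 2)"
    unfolding power2_eq_square by linarith
  then have "\<gamma>\<^sup>2 * real m ^ 2 \<le> \<gamma>\<^sup>2 * (4 * real (m choose 2))"
    by (intro mult_left_mono) simp_all
  also have "\<dots> = 4 * (\<gamma>\<^sup>2 * real (m choose 2))"
    by simp
  also have "\<dots> \<le> 4 * bd_weight \<gamma> d m"
    using bd_weight_ge_quadratic[of \<gamma> d m] assms by simp
  finally have "\<gamma>\<^sup>2 * real m ^ 2 / 4 \<le> bd_weight \<gamma> d m"
    by simp
  moreover have "0 < \<gamma>\<^sup>2 * real m ^ 2 / 4"
    using assms \<open>2 \<le> m\<close> by simp
  ultimately show "norm (1 / bd_weight \<gamma> d m) \<le> 4 / \<gamma>\<^sup>2 * inverse (real m ^ 2)"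
    by (simp add: divide_simps)
qed simp

lemma bd_scale_bd_rates:
  assumes "0 < \<gamma>" and "0 < d"
  shows "bd_scale (bd_lam \<gamma> d l0) (bd_mu \<gamma> d) (real d * \<gamma>) (bd_weight \<gamma> d)"
proof
  obtain e where d: "d = Suc e"
    using assms gr0_implies_Suc by blast
  show "0 < real d * \<gamma>"
    using assms by simp
  show "0 < bd_weight \<gamma> d k" for k
    using bd_weight_ge_one[of \<gamma> d k] assms by simp
  show "bd_lam \<gamma> d l0 i = real d * \<gamma> * bd_weight \<gamma> d i"
    and "bd_mu \<gamma> d i = real d * \<gamma> * bd_weight \<gamma> d (i - 1)" if "0 < i" for i
    using that d bd_lam_Suc bd_mu_Suc by (auto simp: gr0_conv_Suc)
qed

theorem lemma4p2:
  fixes \<gamma> l0 :: real and d :: nat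
  assumes "\<gamma> > 0" and "d \<ge> 1" and "l0 > 0"
  shows "(d \<le> 2 \<longrightarrow> bd_null_recurrent (bd_lam \<gamma> d l0) (bd_mu \<gamma> d))
       \<and> (d \<ge> 3 \<longrightarrow> bd_transient (bd_lam \<gamma> d l0) (bd_mu \<gamma> d))"
proof -
  interpret bd_scale "bd_lam \<gamma> d l0" "bd_mu \<gamma> d" "real d * \<gamma>" "bd_weight \<gamma> d"
    using assms by (intro bd_scale_bd_rates) simp_all
  show ?thesis
    using null_recurrent_if_not_summable[OF not_summable_inverse_bd_weight]
      transient_if_summable[OF summable_inverse_bd_weight] assms
    by simp
qed

end
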